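(* Fix a deterministic adversary $A$, parameters $\varepsilon,\delta,t,k$, a database $S$ and an element $x'\in X$, and let $S'=S\cup\{x'\}$. For a database $T$ let $\mathcal B(T)\in\{\bot,\top\}^*$ be the answer vector of \texttt{ThresholdMonitor} on $T$ interacting with $A$. Let $\vec a=(a_1,a_2,\dots)$ be an outcome vector and $W=(w_1,w_2,\dots)$ a vector of values of the noises $w_i$ such that event $E_3$ (defined in the context, for the execution on $S$) occurs for $(\vec a,W)$. Let $i^*$ be the first time step at which $c_{i^*}(x')\geq k$ (counters computed along $\vec a$), let $I_{\rm top}$ be the set of time steps $i\leq i^*$ with $a_i=\top$, and let $W'$ be the vector with $w'_i=w_i-f_{\vec a,i}(x')$ for $i\in I_{\rm top}$ and $w'_i=w_i$ otherwise. Then $$\Pr[\mathcal B(S')=\vec a\mid W']\leq\Pr[\mathcal B(S)=\vec a\mid W]\leq\exp\left(\frac{75(k+1)\varepsilon}{\log\frac1\delta}+25\varepsilon\right)\Pr[\mathcal B(S')=\vec a\mid W],$$ where conditioning on $W$ (resp. $W'$) means fixing the noises $w_i$ to those values, so that probabilities are only over the noises $v_i$.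
   Context: $X$ is a data domain; databases are finite multisets of elements of $X$. For $f:X\to[0,1]$, $f(D)=\sum_{x\in D}f(x)$. $\mathrm{Lap}(b)$ has density $\frac{1}{2b}e^{-|x|/b}$. Algorithm \texttt{ThresholdMonitor}. Input: database $S$, parameters $\varepsilon,\delta,t,k$, adaptively chosen queries $f_i:X\to[0,1]$. Initialize $c(x)=0$ for all $x\in X$. Let $\Delta=\frac{1}{\varepsilon}\log\left(\frac{1}{\delta}\right)\log\left(\frac{1}{\varepsilon}\log\frac{1}{\delta}\right)$. In round $i$: sample independently $w_i\sim\mathrm{Lap}(10\Delta)$, $v_i\sim\mathrm{Lap}(\frac{1}{\varepsilon}\log\frac{1}{\delta})$; let $\overline{v}_i=\min\{v_i,\Delta\}$, $\hat f_i=f_i(S)+w_i+\overline{v}_i$ (current $S$). If $\hat f_i<t$ output $a_i=\bot$; else output $a_i=\top$, set $c(x)\leftarrow c(x)+f_i(x)$ for all $x\in X$, and delete from $S$ every $x$ with $c(x)\geq k$. Since $A$ is deterministic, the $i$th query is determined by the previous answers; $f_{\vec a,i}$ denotes the query $A$ chooses after seeing the first $i-1$ answers of $\vec a$. In the execution on $S$, $S_i$ is the database before the $i$th query and $c_i(\cdot)$ the counter after round $i$. Time step $i$ is an almost-top if $a_i=\bot$, $c_i(x')<k$ and $f_i(S_i)+w_i\geq t-2\Delta$; it is a special-almost-top if $a_i=\bot$, $c_i(x')<k$ and $t-f_i(x')-\Delta\leq f_i(S_i)+w_i<t-\Delta$. Event $E_1$: $\sum_{i\text{ almost-top}}f_i(x')\leq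 15(k+1)+5\log\frac1\delta$. Event $E_2$: the number of special-almost-tops is at most $30(k+1)+10\log\frac1\delta$. $E_3=E_1\wedge E_2$; it is determined by $\vec a$ and $W$. *)

theory Defs
  imports "HOL-Probability.Probability"
begin

text \<open>An adversary is deterministic: it maps the list of previous answers
  (True = top, False = bot) to the next query f :: 'a => real.
  Rounds are indexed from 0 (round j here is round j+1 of the paper).\<close>

type_synonym 'a adversary = "bool list \<Rightarrow> 'a \<Rightarrow> real"

definition qval :: "('a \<Rightarrow> real) \<Rightarrow> 'a multiset \<Rightarrow> real" where
  "qval f D = (\<Sum>x\<in>#D. f x)"

definition laplace :: "real \<Rightarrow> real measure" where
  "laplace b = density lborel (\<lambda>x. ennreal (exp (- \<bar>x\<bar> / b) / (2 * b)))"

definition Delta :: "real \<Rightarrow> real \<Rightarrow> real" where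
  "Delta eps delta = (1 / eps) * ln (1 / delta) * ln ((1 / eps) * ln (1 / delta))"

definition tm_step :: "'a adversary \<Rightarrow> real \<Rightarrow> real \<Rightarrow> real \<Rightarrow> real \<Rightarrow> real \<Rightarrow> real \<Rightarrow>
    'a multiset \<times> ('a \<Rightarrow> real) \<times> bool list \<Rightarrow> 'a multiset \<times> ('a \<Rightarrow> real) \<times> bool list" where
  "tm_step A eps delta t k w v st =
     (case st of (D, c, as) \<Rightarrow>
       (let f = A as;
            fh = qval f D + w + min v (Delta eps delta)
        in if fh < t then (D, c, as @ [False])
           else (let c' = (\<lambda>x. c x + f x)
                 in (filter_mset (\<lambda>x. \<not> (c' x \<ge> k)) D, c', as @ [True]))))"

primrec tm_run :: "'a adversary \<Rightarrow> real \<Rightarrow> real \<Rightarrow> real \<Rightarrow> real \<Rightarrow> 'a multiset \<Rightarrow>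
    (nat \<Rightarrow> real) \<Rightarrow> (nat \<Rightarrow> real) \<Rightarrow> nat \<Rightarrow> 'a multiset \<times> ('a \<Rightarrow> real) \<times> bool list" where
  "tm_run A eps delta t k S W V 0 = (S, (\<lambda>_. 0), [])"
| "tm_run A eps delta t k S W V (Suc n) =
     tm_step A eps delta t k (W n) (V n) (tm_run A eps delta t k S W V n)"

definition tm_answers :: "'a adversary \<Rightarrow> real \<Rightarrow> real \<Rightarrow> real \<Rightarrow> real \<Rightarrow> 'a multiset \<Rightarrow>
    (nat \<Rightarrow> real) \<Rightarrow> (nat \<Rightarrow> real) \<Rightarrow> nat \<Rightarrow> bool list" where
  "tm_answers A eps delta t k S W V n = snd (snd (tm_run A eps delta t k S W V n))"

text \<open>Pr[B(T) = as | W]: probability over independent v_0,...,v_{n-1} ~ Lap((1/eps) log(1/delta)),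
  n = length as, with the w_i fixed to W, that the answers of the first n rounds equal as.\<close>
definition prob_ans :: "'a adversary \<Rightarrow> real \<Rightarrow> real \<Rightarrow> real \<Rightarrow> real \<Rightarrow> 'a multiset \<Rightarrow>
    (nat \<Rightarrow> real) \<Rightarrow> bool list \<Rightarrow> real" where
  "prob_ans A eps delta t k T W as =
     (let M = PiM {..<length as} (\<lambda>_. laplace ((1 / eps) * ln (1 / delta)))
      in measure M {V \<in> space M. tm_answers A eps delta t k T W V (length as) = as})"

definition cnt :: "'a adversary \<Rightarrow> bool list \<Rightarrow> nat \<Rightarrow> 'a \<Rightarrow> real" where
  "cnt A as i x = (\<Sum>j<i. if as ! j then A (take j as) x else 0)"

primrec db :: "'a adversary \<Rightarrow> real \<Rightarrow> 'a multiset \<Rightarrow> bool list \<Rightarrow> nat \<Rightarrow> 'a multiset" where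
  "db A k S as 0 = S"
| "db A k S as (Suc i) =
     (if as ! i then filter_mset (\<lambda>x. \<not> (cnt A as (Suc i) x \<ge> k)) (db A k S as i)
      else db A k S as i)"

definition almost_top :: "'a adversary \<Rightarrow> real \<Rightarrow> real \<Rightarrow> real \<Rightarrow> real \<Rightarrow> 'a multiset \<Rightarrow> 'a \<Rightarrow>
    bool list \<Rightarrow> (nat \<Rightarrow> real) \<Rightarrow> nat \<Rightarrow> bool" where
  "almost_top A eps delta t k S x' as W i \<longleftrightarrow>
     i < length as \<and> \<not> as ! i \<and> cnt A as (Suc i) x' < k \<and>
     qval (A (take i as)) (db A k S as i) + W i \<ge> t - 2 * Delta eps delta"

definition special_almost_top :: "'a adversary \<Rightarrow> real \<Rightarrow> real \<Rightarrow> real \<Rightarrow> real \<Rightarrow> 'a multiset \<Rightarrow> 'a \<Rightarrow>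
    bool list \<Rightarrow> (nat \<Rightarrow> real) \<Rightarrow> nat \<Rightarrow> bool" where
  "special_almost_top A eps delta t k S x' as W i \<longleftrightarrow>
     i < length as \<and> \<not> as ! i \<and> cnt A as (Suc i) x' < k \<and>
     t - A (take i as) x' - Delta eps delta \<le> qval (A (take i as)) (db A k S as i) + W i \<and>
     qval (A (take i as)) (db A k S as i) + W i < t - Delta eps delta"

definition E1 :: "'a adversary \<Rightarrow> real \<Rightarrow> real \<Rightarrow> real \<Rightarrow> real \<Rightarrow> 'a multiset \<Rightarrow> 'a \<Rightarrow>
    bool list \<Rightarrow> (nat \<Rightarrow> real) \<Rightarrow> bool" where
  "E1 A eps delta t k S x' as W \<longleftrightarrow>
     (\<Sum>i\<in>{i. almost_top A eps delta t k S x' as W i}. A (take i as) x')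
       \<le> 15 * (k + 1) + 5 * ln (1 / delta)"

definition E2 :: "'a adversary \<Rightarrow> real \<Rightarrow> real \<Rightarrow> real \<Rightarrow> real \<Rightarrow> 'a multiset \<Rightarrow> 'a \<Rightarrow>
    bool list \<Rightarrow> (nat \<Rightarrow> real) \<Rightarrow> bool" where
  "E2 A eps delta t k S x' as W \<longleftrightarrow>
     real (card {i. special_almost_top A eps delta t k S x' as W i})
       \<le> 30 * (k + 1) + 10 * ln (1 / delta)"

definition E3 :: "'a adversary \<Rightarrow> real \<Rightarrow> real \<Rightarrow> real \<Rightarrow> real \<Rightarrow> 'a multiset \<Rightarrow> 'a \<Rightarrow>
    bool list \<Rightarrow> (nat \<Rightarrow> real) \<Rightarrow> bool" where
  "E3 A eps delta t k S x' as W \<longleftrightarrow>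
     E1 A eps delta t k S x' as W \<and> E2 A eps delta t k S x' as W"

text \<open>I_top: rounds i (< length as) with answer top and i \<le> i*, where i* is the first round
  after which the counter of x' is \<ge> k (if no such round, all top rounds).\<close>
definition I_top :: "'a adversary \<Rightarrow> real \<Rightarrow> 'a \<Rightarrow> bool list \<Rightarrow> nat set" where
  "I_top A k x' as =
     {i. i < length as \<and> as ! i \<and> (\<forall>j<i. cnt A as (Suc j) x' < k)}"

definition shiftW :: "'a adversary \<Rightarrow> real \<Rightarrow> 'a \<Rightarrow> bool list \<Rightarrow> (nat \<Rightarrow> real) \<Rightarrow> nat \<Rightarrow> real" where
  "shiftW A k x' as W i = (if i \<in> I_top A k x' as then W i - A (take i as) x' else W i)"

end

theory Submission
  imports Defs "HOL-Real_Asymp.Real_Asymp"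
begin

text \<open>Write b = (1/eps) log(1/delta), so that Delta = b log b. Once the noises w_i are fixed, the
  database before round j depends only on the answers given so far, so the event
  B(T) = as is an intersection of independent events, one per round, each depending on v_j
  alone; its probability is a product over rounds. Adding x' to S raises the noisy count of
  round j by f_j(x') for as long as x' has not been deleted. On top rounds the shifted noise W'
  cancels this increase, and on bottom rounds a larger count only shrinks the event, which gives
  the first inequality. For the second, each bottom round compares the probabilities that
  min(v, Delta) stays below t - c and below t - c - f_j(x'): on an almost-top the ratio of the
  Laplace distribution function at these two points is at most exp(f_j(x')/b), on a
  special-almost-top the second probability is at least exp(-2/b), and further below the second
  probability is 1. Events E1 and E2 bound the sum of these per-round losses.\<close>

section \<open>The Laplace distribution\<close>

definition laplace_pdf :: "real \<Rightarrow> real \<Rightarrow> real" where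
  "laplace_pdf b x = exp (- \<bar>x\<bar> / b) / (2 * b)"

definition laplace_cdf :: "real \<Rightarrow> real \<Rightarrow> real" where
  "laplace_cdf b y = (if y \<le> 0 then exp (y / b) / 2 else 1 - exp (- y / b) / 2)"

lemma laplace_eq_density: "laplace b = density lborel (\<lambda>x. ennreal (laplace_pdf b x))"
  by (simp add: laplace_def laplace_pdf_def)

lemma sets_laplace [simp, measurable_cong]: "sets (laplace b) = sets borel"
  by (simp add: laplace_def)

lemma space_laplace [simp]: "space (laplace b) = UNIV"
  by (simp add: laplace_def)

lemma borel_measurable_laplace_pdf [measurable]: "laplace_pdf b \<in> borel_measurable borel"
  unfolding laplace_pdf_def by measurable

lemma nn_integral_laplace_pdf_atLeast:
  assumes b: "b > 0" and a: "a \<ge> 0"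
  shows "(\<integral>\<^sup>+x. ennreal (laplace_pdf b x) * indicator {a..} x \<partial>lborel) = ennreal (exp (- a / b) / 2)"
proof -
  have "(\<integral>\<^sup>+x. ennreal (laplace_pdf b x) * indicator {a..} x \<partial>lborel) = ennreal (0 - (- exp (- a / b) / 2))"
  proof (rule nn_integral_FTC_atLeast)
    fix x :: real assume "a \<le> x"
    then show "0 \<le> laplace_pdf b x" and
      "((\<lambda>x. - exp (- x / b) / 2) has_real_derivative laplace_pdf b x) (at x)"
      using a b by (auto intro!: derivative_eq_intros simp: laplace_pdf_def field_simps)
  next
    show "((\<lambda>x. - exp (- x / b) / 2) \<longlongrightarrow> 0) at_top"
      using b by real_asymp
  qed simp
  then show ?thesis by simp
qed

lemma nn_integral_laplace_pdf_lessThan_eq_atLeast: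
  "(\<integral>\<^sup>+x. ennreal (laplace_pdf b x) * indicator {..<y} x \<partial>lborel)
     = (\<integral>\<^sup>+x. ennreal (laplace_pdf b x) * indicator {-y..} x \<partial>lborel)"
proof -
  have "(\<integral>\<^sup>+x. ennreal (laplace_pdf b x) * indicator {..<y} x \<partial>lborel)
      = (\<integral>\<^sup>+x. ennreal (laplace_pdf b x) * indicator {..<y} x \<partial>distr lborel borel uminus)"
    by (simp add: lborel_distr_uminus)
  also have "\<dots> = (\<integral>\<^sup>+x. ennreal (laplace_pdf b (- x)) * indicator {..<y} (- x) \<partial>lborel)"
    by (rule nn_integral_distr) auto
  also have "\<dots> = (\<integral>\<^sup>+x. ennreal (laplace_pdf b x) * indicator {-y<..} x \<partial>lborel)"
    by (intro nn_integral_cong) (auto simp: laplace_pdf_def split: split_indicator)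
  also have "\<dots> = (\<integral>\<^sup>+x. ennreal (laplace_pdf b x) * indicator {-y..} x \<partial>lborel)"
    using AE_lborel_singleton[of "-y"]
    by (intro nn_integral_cong_AE) (auto elim!: eventually_mono split: split_indicator)
  finally show ?thesis .
qed

lemma emeasure_laplace_atLeast:
  assumes "b > 0" "a \<ge> 0"
  shows "emeasure (laplace b) {a..} = ennreal (exp (- a / b) / 2)"
  using nn_integral_laplace_pdf_atLeast[OF assms]
  by (simp add: laplace_eq_density emeasure_density)

lemma emeasure_laplace_lessThan_nonpos:
  assumes "b > 0" "y \<le> 0"
  shows "emeasure (laplace b) {..<y} = ennreal (exp (y / b) / 2)"
  using nn_integral_laplace_pdf_lessThan_eq_atLeast[of b y] nn_integral_laplace_pdf_atLeast[of b "- y"] assms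
  by (simp add: laplace_eq_density emeasure_density)

lemma prob_space_laplace:
  assumes "b > 0"
  shows "prob_space (laplace b)"
proof
  have "UNIV = {..<0} \<union> {0::real..}" by auto
  then have "emeasure (laplace b) UNIV = emeasure (laplace b) {..<0} + emeasure (laplace b) {0..}"
    by (subst plus_emeasure) auto
  also have "\<dots> = ennreal (1 / 2) + ennreal (1 / 2)"
    using assms by (simp add: emeasure_laplace_lessThan_nonpos emeasure_laplace_atLeast)
  also have "\<dots> = 1"
    by (subst ennreal_plus[symmetric]) auto
  finally show "emeasure (laplace b) (space (laplace b)) = 1" by simp
qed

lemma measure_laplace_lessThan:
  assumes b: "b > 0"
  shows "measure (laplace b) {v. v < y} = laplace_cdf b y"
proof -
  interpret prob_space "laplace b" by (rule prob_space_laplace[OF b])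
  show ?thesis
  proof (cases "y \<le> 0")
    case True
    then show ?thesis
      using emeasure_laplace_lessThan_nonpos[OF b True]
      by (simp add: laplace_cdf_def emeasure_eq_measure lessThan_def)
  next
    case False
    have "measure (laplace b) {..<y} = 1 - measure (laplace b) {y..}"
      using prob_compl[of "{y..}"] by (simp add: Compl_eq_Diff_UNIV[symmetric])
    then show ?thesis
      using emeasure_laplace_atLeast[OF b, of y] False
      by (simp add: laplace_cdf_def emeasure_eq_measure lessThan_def)
  qed
qed

lemma exp_half_ge_one_minus_exp_neg_half: "1 - exp (- x) / 2 \<le> exp (x :: real) / 2"
proof -
  have "0 \<le> (exp x - 1)\<^sup>2" by (rule zero_le_power2)
  then show ?thesis
    by (simp add: exp_minus field_simps power2_eq_square)
qed

lemma laplace_cdf_ge: "1 - exp (- y / b) / 2 \<le> laplace_cdf b y"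
  using exp_half_ge_one_minus_exp_neg_half[of "y / b"] by (simp add: laplace_cdf_def)

lemma laplace_cdf_le: "laplace_cdf b y \<le> exp (y / b) / 2"
  using exp_half_ge_one_minus_exp_neg_half[of "y / b"] by (simp add: laplace_cdf_def)

lemma laplace_cdf_le_exp_shift:
  assumes b: "b > 0" and f: "f \<ge> 0"
  shows "laplace_cdf b y \<le> exp (f / b) * laplace_cdf b (y - f)"
proof (cases "y - f \<le> 0")
  case True
  have "exp (f / b) * laplace_cdf b (y - f) = exp (y / b) / 2"
    using True by (simp add: laplace_cdf_def diff_divide_distrib flip: exp_add)
  then show ?thesis using laplace_cdf_le[of b y] by simp
next
  case False
  define a where "a = exp (f / b)"
  define z where "z = exp (- y / b)"
  have az: "a * z = exp (- (y - f) / b)"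
    by (simp add: a_def z_def diff_divide_distrib flip: exp_add)
  have "a \<ge> 1" using f b by (simp add: a_def)
  moreover have "a * z \<le> 1"
    unfolding az using False b by (simp add: divide_nonpos_pos)
  moreover have "z \<le> a * z"
    using \<open>a \<ge> 1\<close> by (simp add: z_def)
  ultimately have "0 \<le> (a - 1) * (1 - (a * z + z) / 2)"
    by (intro mult_nonneg_nonneg) auto
  then have "1 - z / 2 \<le> a * (1 - a * z / 2)"
    by (simp add: algebra_simps add_divide_distrib diff_divide_distrib)
  then show ?thesis
    using False f b az by (simp add: laplace_cdf_def a_def z_def)
qed

lemma one_le_exp_double_mult_one_minus_half_mult_exp:
  fixes z :: real
  assumes z: "z > 0" and small: "exp (2 * z) < 2"
  shows "1 \<le> exp (2 * z) * (1 - z * exp z / 2)"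
proof -
  have "1 + 2 * z < 2" using exp_ge_add_one_self[of "2 * z"] small by linarith
  moreover have "exp z < 2"
    using small exp_le_cancel_iff[of z "2 * z"] z by linarith
  ultimately have "z * exp z < (1 / 2) * 2" "(1 / 2 + z) * exp z < 1 * 2"
    using z by (intro mult_strict_mono; simp)+
  then have "z * exp z < 1" "exp z / 2 + z * exp z < 2"
    by (simp_all add: algebra_simps)
  moreover have "(1 + 2 * z) * (1 - z * exp z / 2) = 1 + z * (2 - (exp z / 2 + z * exp z))"
    by (simp add: algebra_simps)
  ultimately have "1 \<le> (1 + 2 * z) * (1 - z * exp z / 2)"
    using z by simp
  also have "\<dots> \<le> exp (2 * z) * (1 - z * exp z / 2)"
    using \<open>z * exp z < 1\<close> by (intro mult_right_mono) (auto simp: exp_ge_add_one_self)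
  finally show ?thesis .
qed

lemma exp_neg_two_div_le_laplace_cdf:
  assumes b: "b > 1" and y: "y \<ge> b * ln b - 1"
  shows "exp (- 2 / b) \<le> laplace_cdf b y"
proof -
  define z where "z = 1 / b"
  have z: "0 < z" "z < 1" using b by (auto simp: z_def)
  have "ln b - z = (b * ln b - 1) / b" using b by (simp add: z_def field_simps)
  also have "\<dots> \<le> y / b" using y b by (simp add: divide_right_mono)
  finally have yb: "ln b - z \<le> y / b" .
  have "1 \<le> exp (2 * z) * laplace_cdf b y"
  proof (cases "y \<le> 0")
    case True
    have "2 \<le> b * (1 + z)" using b by (simp add: z_def field_simps)
    also have "\<dots> \<le> b * exp z" using b by (simp add: exp_ge_add_one_self)
    also have "\<dots> = exp (2 * z) * exp (ln b - z)"
      using b by (simp add: exp_diff field_simps flip: exp_add)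
    also have "\<dots> \<le> exp (2 * z) * exp (y / b)" using yb by simp
    finally show ?thesis using True by (simp add: laplace_cdf_def)
  next
    case False
    show ?thesis
    proof (cases "exp (2 * z) \<ge> 2")
      case True
      have "1 / 2 \<le> laplace_cdf b y" using False b by (simp add: laplace_cdf_def)
      then show ?thesis using True mult_mono[of 2 "exp (2 * z)" "1 / 2" "laplace_cdf b y"] by simp
    next
      case small: False
      have "exp (- y / b) \<le> exp (z - ln b)" using yb by simp
      also have "\<dots> = z * exp z" using b by (simp add: exp_diff z_def)
      finally have cdf: "1 - z * exp z / 2 \<le> laplace_cdf b y"
        using laplace_cdf_ge[of y b] by linarith
      have "1 \<le> exp (2 * z) * (1 - z * exp z / 2)"
        using z small by (intro one_le_exp_double_mult_one_minus_half_mult_exp) auto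
      also have "\<dots> \<le> exp (2 * z) * laplace_cdf b y"
        using cdf by (intro mult_left_mono) auto
      finally show ?thesis .
    qed
  qed
  then show ?thesis by (simp add: z_def exp_minus field_simps)
qed

lemma measure_laplace_capped_threshold_le:
  assumes b: "b > 0" and f: "f \<ge> 0" and cap: "t - c \<le> D"
  shows "measure (laplace b) {v. c + min v D < t}
           \<le> exp (f / b) * measure (laplace b) {v. c + f + min v D < t}"
proof -
  interpret prob_space "laplace b" by (rule prob_space_laplace[OF b])
  have "measure (laplace b) {v. c + min v D < t} \<le> measure (laplace b) {v. v < t - c}"
    using cap by (intro finite_measure_mono) auto
  also have "\<dots> \<le> exp (f / b) * laplace_cdf b (t - c - f)"
    using laplace_cdf_le_exp_shift[OF b f] by (simp add: measure_laplace_lessThan[OF b])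
  also have "laplace_cdf b (t - c - f) \<le> measure (laplace b) {v. c + f + min v D < t}"
    unfolding measure_laplace_lessThan[OF b, symmetric] by (intro finite_measure_mono) auto
  finally show ?thesis by simp
qed

lemma measure_laplace_capped_threshold_ge:
  assumes b: "b > 1" and f: "f \<le> 1" and below_cap: "c < t - b * ln b"
  shows "exp (- 2 / b) \<le> measure (laplace b) {v. c + f + min v (b * ln b) < t}"
proof -
  interpret prob_space "laplace b" by (rule prob_space_laplace) (use b in simp)
  have "exp (- 2 / b) \<le> laplace_cdf b (t - c - f)"
    using b f below_cap by (intro exp_neg_two_div_le_laplace_cdf) auto
  also have "\<dots> \<le> measure (laplace b) {v. c + f + min v (b * ln b) < t}"
    using b by (subst measure_laplace_lessThan[symmetric]) (auto intro!: finite_measure_mono)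
  finally show ?thesis .
qed

section \<open>ThresholdMonitor along a fixed answer vector\<close>

definition answer_event :: "'a adversary \<Rightarrow> real \<Rightarrow> real \<Rightarrow> real \<Rightarrow> real \<Rightarrow> 'a multiset \<Rightarrow>
    (nat \<Rightarrow> real) \<Rightarrow> bool list \<Rightarrow> nat \<Rightarrow> real set" where
  "answer_event A eps delta t k T W as j =
     {v. qval (A (take j as)) (db A k T as j) + W j + min v (Delta eps delta) < t \<longleftrightarrow> \<not> as ! j}"

lemma answer_event_in_borel [measurable]: "answer_event A eps delta t k T W as j \<in> sets borel"
  unfolding answer_event_def by measurable

lemma tm_answers_Suc:
  "tm_answers A eps delta t k T W V (Suc m) =
     tm_answers A eps delta t k T W V m @
       [\<not> qval (A (tm_answers A eps delta t k T W V m)) (fst (tm_run A eps delta t k T W V m))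
            + W m + min (V m) (Delta eps delta) < t]"
  by (simp add: tm_answers_def tm_step_def Let_def split: prod.split)

lemma cnt_0 [simp]: "cnt A as 0 x = 0"
  by (simp add: cnt_def)

lemma cnt_Suc: "cnt A as (Suc j) x = cnt A as j x + (if as ! j then A (take j as) x else 0)"
  by (simp add: cnt_def)

lemma tm_run_eq_db_cnt:
  assumes "m \<le> length as" and "\<forall>j<m. V j \<in> answer_event A eps delta t k T W as j"
  shows "tm_run A eps delta t k T W V m = (db A k T as m, cnt A as m, take m as)"
  using assms
proof (induction m)
  case 0
  then show ?case by (simp add: fun_eq_iff)
next
  case (Suc m)
  then have run: "tm_run A eps delta t k T W V m = (db A k T as m, cnt A as m, take m as)"
    by simp
  have "qval (A (take m as)) (db A k T as m) + W m + min (V m) (Delta eps delta) < t \<longleftrightarrow> \<not> as ! m"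
    using Suc.prems by (simp add: answer_event_def)
  then show ?case
    using Suc.prems run
    by (auto simp: tm_step_def Let_def take_Suc_conv_app_nth cnt_Suc fun_eq_iff)
qed

lemma tm_answers_eq_take_iff:
  assumes "m \<le> length as"
  shows "tm_answers A eps delta t k T W V m = take m as
           \<longleftrightarrow> (\<forall>j<m. V j \<in> answer_event A eps delta t k T W as j)"
  using assms
proof (induction m)
  case 0
  then show ?case by (simp add: tm_answers_def)
next
  case (Suc m)
  have take_Suc: "take (Suc m) as = take m as @ [as ! m]"
    using Suc.prems by (simp add: take_Suc_conv_app_nth)
  show ?case
  proof (cases "\<forall>j<m. V j \<in> answer_event A eps delta t k T W as j")
    case True
    then have "tm_run A eps delta t k T W V m = (db A k T as m, cnt A as m, take m as)"
      using Suc.prems by (intro tm_run_eq_db_cnt) auto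
    then have "tm_answers A eps delta t k T W V (Suc m) = take m as @
        [\<not> qval (A (take m as)) (db A k T as m) + W m + min (V m) (Delta eps delta) < t]"
      unfolding tm_answers_Suc by (simp add: tm_answers_def)
    then show ?thesis
      using True by (auto simp: take_Suc answer_event_def less_Suc_eq)
  next
    case False
    then have "tm_answers A eps delta t k T W V m \<noteq> take m as"
      using Suc by simp
    then show ?thesis
      using False by (auto simp: tm_answers_Suc take_Suc less_Suc_eq)
  qed
qed

lemma prob_ans_eq_prod_answer_event:
  assumes b: "(1 / eps) * ln (1 / delta) > 0"
  shows "prob_ans A eps delta t k T W as =
     (\<Prod>j<length as. measure (laplace ((1 / eps) * ln (1 / delta))) (answer_event A eps delta t k T W as j))"
proof -
  define L where "L = laplace ((1 / eps) * ln (1 / delta))"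
  define M where "M = PiM {..<length as} (\<lambda>_. L)"
  interpret L: prob_space L
    unfolding L_def by (rule prob_space_laplace[OF b])
  interpret product_prob_space "\<lambda>_. L" "{..<length as}" ..
  have "tm_answers A eps delta t k T W V (length as) = as
      \<longleftrightarrow> (\<forall>j<length as. V j \<in> answer_event A eps delta t k T W as j)" for V
    using tm_answers_eq_take_iff[of "length as" as] by simp
  then have "emeasure M {V \<in> space M. tm_answers A eps delta t k T W V (length as) = as}
      = emeasure M {V \<in> space M. \<forall>j\<in>{..<length as}. V j \<in> answer_event A eps delta t k T W as j}"
    by (auto intro!: arg_cong[where f = "emeasure M"])
  also have "\<dots> = (\<Prod>j<length as. emeasure L (answer_event A eps delta t k T W as j))"
    unfolding M_def by (rule emeasure_PiM_Collect) (auto simp: L_def)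
  also have "\<dots> = ennreal (\<Prod>j<length as. measure L (answer_event A eps delta t k T W as j))"
    by (simp add: L.emeasure_eq_measure prod_ennreal)
  finally have "measure M {V \<in> space M. tm_answers A eps delta t k T W V (length as) = as}
      = (\<Prod>j<length as. measure L (answer_event A eps delta t k T W as j))"
    by (simp add: measure_def prod_nonneg)
  then show ?thesis
    by (simp add: prob_ans_def M_def L_def)
qed

section \<open>Adding one element to the database\<close>

definition alive :: "'a adversary \<Rightarrow> real \<Rightarrow> 'a \<Rightarrow> bool list \<Rightarrow> nat \<Rightarrow> bool" where
  "alive A k x as j \<longleftrightarrow> (\<forall>i<j. cnt A as (Suc i) x < k)"

lemma alive_Suc: "alive A k x as (Suc j) \<longleftrightarrow> alive A k x as j \<and> cnt A as (Suc j) x < k"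
  by (auto simp: alive_def less_Suc_eq)

lemma cnt_less_if_alive:
  assumes "k > 0" and "alive A k x as j"
  shows "cnt A as j x < k"
  using assms by (cases j) (auto simp: alive_def)

lemma db_add_mset:
  assumes k: "k > 0"
  shows "db A k (S + {#x#}) as j = db A k S as j + (if alive A k x as j then {#x#} else {#})"
proof (induction j)
  case 0
  then show ?case by (simp add: alive_def)
next
  case (Suc j)
  show ?case
  proof (cases "as ! j")
    case True
    then show ?thesis using Suc by (auto simp: alive_Suc not_le)
  next
    case False
    then have "alive A k x as (Suc j) \<longleftrightarrow> alive A k x as j"
      using cnt_less_if_alive[OF k] by (auto simp: alive_Suc cnt_Suc)
    then show ?thesis using Suc False by simp
  qed
qed

lemma answer_event_add_mset:
  assumes "k > 0"
  shows "answer_event A eps delta t k (S + {#x#}) W as j =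
     {v. qval (A (take j as)) (db A k S as j) + (if alive A k x as j then A (take j as) x else 0)
           + W j + min v (Delta eps delta) < t \<longleftrightarrow> \<not> as ! j}"
  unfolding answer_event_def db_add_mset[OF assms] by (simp add: qval_def add_ac)

lemma answer_event_shiftW_subset:
  assumes "k > 0" and "A (take j as) x \<ge> 0" and "j < length as"
  shows "answer_event A eps delta t k (S + {#x#}) (shiftW A k x as W) as j
           \<subseteq> answer_event A eps delta t k S W as j"
  using assms unfolding answer_event_add_mset[OF \<open>k > 0\<close>]
  by (auto simp: answer_event_def shiftW_def I_top_def alive_def)

definition round_loss :: "'a adversary \<Rightarrow> real \<Rightarrow> real \<Rightarrow> real \<Rightarrow> real \<Rightarrow> 'a multiset \<Rightarrow> 'a \<Rightarrow>
    bool list \<Rightarrow> (nat \<Rightarrow> real) \<Rightarrow> nat \<Rightarrow> real" where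
  "round_loss A eps delta t k S x as W j =
     ((if almost_top A eps delta t k S x as W j then A (take j as) x else 0)
      + (if special_almost_top A eps delta t k S x as W j then 2 else 0))
     / ((1 / eps) * ln (1 / delta))"

lemma measure_laplace_capped_threshold_le_exp:
  assumes b: "b > 1" and f: "0 \<le> f" "f \<le> 1" and l: "l \<ge> 0"
    and near_loss: "t - b * ln b \<le> c \<Longrightarrow> f / b \<le> l"
    and special_loss: "t - f - b * ln b \<le> c \<Longrightarrow> c < t - b * ln b \<Longrightarrow> 2 / b \<le> l"
  shows "measure (laplace b) {v. c + min v (b * ln b) < t}
           \<le> exp l * measure (laplace b) {v. c + f + min v (b * ln b) < t}"
proof -
  interpret prob_space "laplace b" by (rule prob_space_laplace) (use b in simp)
  define P where "P = measure (laplace b) {v. c + min v (b * ln b) < t}"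
  define P' where "P' = measure (laplace b) {v. c + f + min v (b * ln b) < t}"
  consider (near) "t - b * ln b \<le> c" | (special) "t - f - b * ln b \<le> c" "c < t - b * ln b"
    | (far) "c < t - f - b * ln b"
    by linarith
  then have "P \<le> exp l * P'"
  proof cases
    case near
    have "P \<le> exp (f / b) * P'"
      unfolding P_def P'_def using b f near by (intro measure_laplace_capped_threshold_le) auto
    also have "\<dots> \<le> exp l * P'"
      using near near_loss by (intro mult_right_mono) (auto simp: P'_def)
    finally show ?thesis .
  next
    case special
    have "P \<le> exp (2 / b) * exp (- 2 / b)" by (simp add: P_def flip: exp_add)
    also have "\<dots> \<le> exp (2 / b) * P'"
      unfolding P'_def using b f special
      by (intro mult_left_mono measure_laplace_capped_threshold_ge) auto
    also have "\<dots> \<le> exp l * P'"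
      using special special_loss by (intro mult_right_mono) (auto simp: P'_def)
    finally show ?thesis .
  next
    case far
    then have "{v. c + f + min v (b * ln b) < t} = space (laplace b)" by (auto simp: min_def)
    then have "P' = 1" unfolding P'_def using prob_space by simp
    moreover have "P \<le> 1" by (simp add: P_def)
    moreover have "1 \<le> exp l" using l by simp
    ultimately show ?thesis by (metis mult.right_neutral order_trans)
  qed
  then show ?thesis by (simp add: P_def P'_def)
qed

lemma measure_answer_event_le_exp_round_loss:
  assumes b: "(1 / eps) * ln (1 / delta) > 1" and k: "k > 0" and j: "j < length as"
    and query: "0 \<le> A (take j as) x" "A (take j as) x \<le> 1"
  shows "measure (laplace ((1 / eps) * ln (1 / delta))) (answer_event A eps delta t k S W as j)
    \<le> exp (round_loss A eps delta t k S x as W j)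
      * measure (laplace ((1 / eps) * ln (1 / delta))) (answer_event A eps delta t k (S + {#x#}) W as j)"
proof -
  define b where "b = (1 / eps) * ln (1 / delta)"
  define c where "c = qval (A (take j as)) (db A k S as j) + W j"
  define f where "f = A (take j as) x"
  define loss where "loss = round_loss A eps delta t k S x as W j"
  interpret prob_space "laplace b" using b by (simp add: b_def prob_space_laplace)
  have "b > 1" using b by (simp add: b_def)
  have f: "0 \<le> f" "f \<le> 1" using query by (simp_all add: f_def)
  have Delta: "Delta eps delta = b * ln b" by (simp add: Delta_def b_def)
  have loss: "loss = ((if almost_top A eps delta t k S x as W j then f else 0)
      + (if special_almost_top A eps delta t k S x as W j then 2 else 0)) / b"
    by (simp add: loss_def round_loss_def b_def f_def)
  have "loss \<ge> 0" using \<open>b > 1\<close> f by (simp add: loss)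
  have ev: "answer_event A eps delta t k S W as j = {v. c + min v (b * ln b) < t \<longleftrightarrow> \<not> as ! j}"
    by (simp add: answer_event_def c_def Delta)
  have ev': "answer_event A eps delta t k (S + {#x#}) W as j =
      {v. c + (if alive A k x as j then f else 0) + min v (b * ln b) < t \<longleftrightarrow> \<not> as ! j}"
    unfolding answer_event_add_mset[OF k] by (simp add: c_def f_def Delta add_ac)
  have "measure (laplace b) (answer_event A eps delta t k S W as j)
      \<le> exp loss * measure (laplace b) (answer_event A eps delta t k (S + {#x#}) W as j)"
  proof (cases "\<not> as ! j \<and> alive A k x as j")
    case True
    then have cnt: "cnt A as (Suc j) x < k"
      using cnt_less_if_alive[OF k, of A x as j] by (simp add: cnt_Suc)
    have evS: "answer_event A eps delta t k S W as j = {v. c + min v (b * ln b) < t}"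
      and evS': "answer_event A eps delta t k (S + {#x#}) W as j = {v. c + f + min v (b * ln b) < t}"
      using True unfolding ev ev' by simp_all
    show ?thesis
      unfolding evS evS' using True cnt j \<open>b > 1\<close> f \<open>loss \<ge> 0\<close>
      by (intro measure_laplace_capped_threshold_le_exp)
        (auto simp: loss almost_top_def special_almost_top_def c_def f_def Delta divide_right_mono
          intro: order_trans[of _ "t - b * ln b"])
  next
    case False
    then have "answer_event A eps delta t k S W as j \<subseteq> answer_event A eps delta t k (S + {#x#}) W as j"
      using f unfolding ev ev' by auto
    then have "measure (laplace b) (answer_event A eps delta t k S W as j)
        \<le> measure (laplace b) (answer_event A eps delta t k (S + {#x#}) W as j)"
      by (intro finite_measure_mono) auto
    also have "\<dots> \<le> exp loss * measure (laplace b) (answer_event A eps delta t k (S + {#x#}) W as j)"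
      using \<open>loss \<ge> 0\<close> by (simp add: mult_le_cancel_right1)
    finally show ?thesis .
  qed
  then show ?thesis by (simp add: b_def loss_def)
qed

lemma sum_round_loss_le:
  assumes E3: "E3 A eps delta t k S x as W" and "eps > 0" and "0 < delta" "delta < 1"
  shows "(\<Sum>j<length as. round_loss A eps delta t k S x as W j)
           \<le> 75 * (k + 1) * eps / ln (1 / delta) + 25 * eps"
proof -
  define L where "L = ln (1 / delta)"
  define AT where "AT = {j. almost_top A eps delta t k S x as W j}"
  define SP where "SP = {j. special_almost_top A eps delta t k S x as W j}"
  have "L > 0" using \<open>0 < delta\<close> \<open>delta < 1\<close> by (simp add: L_def)
  have AT: "AT = {j \<in> {..<length as}. almost_top A eps delta t k S x as W j}"
    by (auto simp: AT_def almost_top_def)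
  have SP: "SP = {j \<in> {..<length as}. special_almost_top A eps delta t k S x as W j}"
    by (auto simp: SP_def special_almost_top_def)
  have "(\<Sum>j<length as. round_loss A eps delta t k S x as W j)
      = ((\<Sum>j<length as. if almost_top A eps delta t k S x as W j then A (take j as) x else 0)
         + (\<Sum>j<length as. if special_almost_top A eps delta t k S x as W j then 2 else 0))
        / ((1 / eps) * L)"
    unfolding round_loss_def sum_divide_distrib[symmetric] sum.distrib L_def ..
  also have "\<dots> = ((\<Sum>j\<in>AT. A (take j as) x) + 2 * real (card SP)) * eps / L"
    unfolding AT SP by (simp add: sum.inter_filter[symmetric] del: lessThan_iff)
  also have "\<dots> \<le> ((15 * (k + 1) + 5 * L) + 2 * (30 * (k + 1) + 10 * L)) * eps / L"
    using E3 \<open>eps > 0\<close> \<open>L > 0\<close>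
    by (intro divide_right_mono mult_right_mono add_mono)
       (auto simp: E3_def E1_def E2_def AT_def SP_def L_def)
  also have "\<dots> = 75 * (k + 1) * eps / ln (1 / delta) + 25 * eps"
    using \<open>L > 0\<close> by (simp add: L_def field_simps)
  finally show ?thesis .
qed

theorem lemma3p7:
  fixes A :: "'a adversary" and eps delta t k :: real
    and S :: "'a multiset" and x' :: 'a and as :: "bool list" and W :: "nat \<Rightarrow> real"
  assumes queries: "\<And>bs x. 0 \<le> A bs x \<and> A bs x \<le> 1"
    and eps: "eps > 0" and delta: "0 < delta" "delta < 1"
    and Delta_pos: "(1 / eps) * ln (1 / delta) > 1"
    and k: "k > 0"
    and E3: "E3 A eps delta t k S x' as W"
  shows "prob_ans A eps delta t k (S + {#x'#}) (shiftW A k x' as W) as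
           \<le> prob_ans A eps delta t k S W as \<and>
         prob_ans A eps delta t k S W as
           \<le> exp (75 * (k + 1) * eps / ln (1 / delta) + 25 * eps)
             * prob_ans A eps delta t k (S + {#x'#}) W as"
proof -
  define b where "b = (1 / eps) * ln (1 / delta)"
  define P where "P T V j = measure (laplace b) (answer_event A eps delta t k T V as j)" for T V j
  define loss where "loss = round_loss A eps delta t k S x' as W"
  interpret prob_space "laplace b"
    using Delta_pos by (simp add: b_def prob_space_laplace)
  have prob_ans: "prob_ans A eps delta t k T V as = (\<Prod>j<length as. P T V j)" for T V
    by (subst prob_ans_eq_prod_answer_event) (use Delta_pos in \<open>auto simp: P_def b_def\<close>)
  have "P (S + {#x'#}) (shiftW A k x' as W) j \<le> P S W j" if "j < length as" for j
    unfolding P_def using answer_event_shiftW_subset[where A = A and x = x', OF k conjunct1[OF queries] that]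
    by (intro finite_measure_mono) auto
  then have shifted: "(\<Prod>j<length as. P (S + {#x'#}) (shiftW A k x' as W) j) \<le> (\<Prod>j<length as. P S W j)"
    by (intro prod_mono) (auto simp: P_def)
  have "P S W j \<le> exp (loss j) * P (S + {#x'#}) W j" if "j < length as" for j
    unfolding P_def b_def loss_def
    using queries by (intro measure_answer_event_le_exp_round_loss Delta_pos k that) auto
  then have "(\<Prod>j<length as. P S W j) \<le> (\<Prod>j<length as. exp (loss j) * P (S + {#x'#}) W j)"
    by (intro prod_mono) (auto simp: P_def)
  also have "\<dots> = exp (\<Sum>j<length as. loss j) * (\<Prod>j<length as. P (S + {#x'#}) W j)"
    by (simp add: prod.distrib exp_sum)
  also have "\<dots> \<le> exp (75 * (k + 1) * eps / ln (1 / delta) + 25 * eps) * (\<Prod>j<length as. P (S + {#x'#}) W j)"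
    using sum_round_loss_le[OF E3 eps delta]
    by (intro mult_right_mono prod_nonneg) (auto simp: loss_def P_def)
  finally show ?thesis
    using shifted by (simp add: prob_ans)
qed

end
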